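(* Let $n=p_1^{\alpha_1}p_2^{\alpha_2}p_3^{\alpha_3}$, where $\alpha_1,\alpha_2,\alpha_3$ are positive integers and $p_1<p_2<p_3$ are primes. Let $\{i,j,k\}=\{1,2,3\}$ with $i<j$. If $(p_i+p_j)\,\phi(p_jp_k)-p_ip_jp_k>0$, then $\deg(p_i^{\beta_i}p_j)>\deg(p_j)$ in $\mathcal{P}(C_n)$ for every $1\leq\beta_i\leq\alpha_i$.
   Context: For a finite group $G$, the power graph $\mathcal{P}(G)$ is the simple undirected graph with vertex set $G$ in which two distinct vertices are adjacent if one is an integral power of the other. $C_n$ denotes the cyclic group of order $n$, identified with $\mathbb{Z}_n=\{0,1,\ldots,n-1\}$, so a positive divisor $d$ of $n$ is regarded as the element $d\bmod n\in\mathbb{Z}_n$. $\deg(a)$ is the degree of vertex $a$ in $\mathcal{P}(C_n)$ and $\phi$ is Euler's totient function. *)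

theory Defs
  imports "HOL-Number_Theory.Number_Theory"
begin

text \<open>Power graph of the cyclic group C_n, identified with Z_n = {0,...,n-1}
 (additive notation: the integral power a^k is k*a mod n).\<close>

definition cyc_power_adj :: "nat \<Rightarrow> nat \<Rightarrow> nat \<Rightarrow> bool" where
  "cyc_power_adj n a b \<longleftrightarrow> a \<noteq> b \<and>
     ((\<exists>k::int. int b = (k * int a) mod int n) \<or> (\<exists>k::int. int a = (k * int b) mod int n))"

definition cyc_power_deg :: "nat \<Rightarrow> nat \<Rightarrow> nat" where
  "cyc_power_deg n a = card {b \<in> {0..<n}. cyc_power_adj n a b}"

end

theory Submission
  imports Defs
begin

text \<open>
  Write \<open>d = gcd x n\<close>. The closed neighbourhood of \<open>x\<close> in the power graph of \<open>C_n\<close>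
  consists of the \<open>n/d\<close> multiples of \<open>d\<close> and, for each proper divisor \<open>e\<close> of \<open>d\<close>,
  the \<open>\<phi>(n/e)\<close> elements \<open>b\<close> with \<open>gcd b n = e\<close>. For a prime \<open>q\<close> dividing \<open>n\<close>
  this gives \<open>n/q + \<phi>(n)\<close>. For \<open>x = p_i^\<beta> p_j\<close> the proper divisors \<open>1\<close>,
  \<open>p_i^(s+1)\<close> and \<open>p_i^s p_j\<close> (\<open>s < \<beta>\<close>) already contribute enough: the \<open>\<phi>(n)\<close>
  terms cancel, the totients of the powers of \<open>p_i\<close> telescope, and the comparison reduces to
  \<open>(p_i + p_j) \<phi>(p_j p_k) > p_i p_j p_k\<close>.
\<close>

lemma mod_multiple_eq_iff_gcd_dvd:
  fixes n a b :: nat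
  assumes "b < n"
  shows "(\<exists>k::int. int b = (k * int a) mod int n) \<longleftrightarrow> gcd a n dvd b"
proof
  assume "\<exists>k::int. int b = (k * int a) mod int n"
  then obtain k where "[k * int a = int b] (mod int n)"
    by (auto simp: cong_def)
  then have "[k * int a = int b] (mod gcd (int a) (int n))"
    by (rule cong_dvd_modulus) simp
  then have "gcd (int a) (int n) dvd int b"
    using cong_dvd_iff by (metis dvd_mult gcd_dvd1)
  then show "gcd a n dvd b"
    by (metis gcd_int_int_eq int_dvd_int_iff)
next
  assume "gcd a n dvd b"
  then have "gcd (int a) (int n) dvd int b"
    by (metis gcd_int_int_eq int_dvd_int_iff)
  then obtain k where "[int a * k = int b] (mod int n)"
    using cong_solve_dvd_int by blast
  then have "int b = (k * int a) mod int n"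
    using assms by (simp add: cong_def mult.commute)
  then show "\<exists>k::int. int b = (k * int a) mod int n" ..
qed

lemma cyc_power_adj_iff:
  fixes n a b :: nat
  assumes "a < n" "b < n"
  shows "cyc_power_adj n a b \<longleftrightarrow> a \<noteq> b \<and> (gcd a n dvd b \<or> gcd b n dvd a)"
  unfolding cyc_power_adj_def
  using mod_multiple_eq_iff_gcd_dvd[OF assms(1)] mod_multiple_eq_iff_gcd_dvd[OF assms(2)] by blast

definition cyc_power_closed_nbhd :: "nat \<Rightarrow> nat \<Rightarrow> nat set" where
  "cyc_power_closed_nbhd n x = {b \<in> {0..<n}. gcd x n dvd b \<or> gcd b n dvd x}"

lemma cyc_power_deg_eq_card_closed_nbhd:
  assumes "x < n"
  shows "cyc_power_deg n x = card (cyc_power_closed_nbhd n x) - 1"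
proof -
  have "{b \<in> {0..<n}. cyc_power_adj n x b} = cyc_power_closed_nbhd n x - {x}"
    using cyc_power_adj_iff[OF assms] unfolding cyc_power_closed_nbhd_def by auto
  moreover have "x \<in> cyc_power_closed_nbhd n x"
    using assms unfolding cyc_power_closed_nbhd_def by auto
  ultimately show ?thesis
    unfolding cyc_power_deg_def by (simp add: cyc_power_closed_nbhd_def)
qed

lemma card_multiples_below:
  fixes d n :: nat
  assumes "d dvd n" "n > 0"
  shows "card {b \<in> {0..<n}. d dvd b} = n div d"
proof -
  have "d > 0" using assms by auto
  then have "{b \<in> {0..<n}. d dvd b} = (\<lambda>k. k * d) ` {0..<n div d}"
    using assms by (auto simp: image_iff dvd_div_mult_self less_mult_imp_div_less elim!: dvdE)
  moreover have "inj_on (\<lambda>k. k * d) {0..<n div d}" using \<open>d > 0\<close> by (auto simp: inj_on_def)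
  ultimately show ?thesis by (simp add: card_image)
qed

lemma card_gcd_eq_below:
  fixes d n :: nat
  assumes "d dvd n" "d < n"
  shows "card {b \<in> {0..<n}. gcd b n = d} = totient (n div d)"
proof -
  have "{b \<in> {0..<n}. gcd b n = d} = {b \<in> {0<..n}. gcd b n = d}"
    using assms by (auto simp: order.order_iff_strict)
  then show ?thesis using card_gcd_eq_totient[of n d] assms by simp
qed

lemma card_cyc_power_closed_nbhd:
  assumes "x dvd n" "n > 0"
  shows "card (cyc_power_closed_nbhd n x) = n div x + (\<Sum>e | e dvd x \<and> e \<noteq> x. totient (n div e))"
proof -
  define E where "E = {e. e dvd x \<and> e \<noteq> x}"
  let ?M = "{b \<in> {0..<n}. x dvd b}"
  let ?G = "\<lambda>e. {b \<in> {0..<n}. gcd b n = e}"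
  have "x > 0" using assms by auto
  have E: "e dvd n" "e < n" if "e \<in> E" for e
    using that assms \<open>x > 0\<close> dvd_imp_le[of e x] dvd_imp_le[of x n]
    by (auto simp: E_def intro: dvd_trans)
  have "finite E" using \<open>x > 0\<close> by (simp add: E_def)
  have "gcd x n = x" using assms(1) by (simp add: gcd_nat.absorb1)
  then have "cyc_power_closed_nbhd n x = ?M \<union> (\<Union>e\<in>E. ?G e)"
    unfolding cyc_power_closed_nbhd_def E_def by (auto dest: dvd_antisym)
  moreover have "?M \<inter> (\<Union>e\<in>E. ?G e) = {}"
    using assms(1) by (auto simp: E_def intro: dvd_antisym gcd_greatest)
  moreover have "card (\<Union>e\<in>E. ?G e) = (\<Sum>e\<in>E. card (?G e))"
    using \<open>finite E\<close> by (intro card_UN_disjoint) auto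
  moreover have "(\<Sum>e\<in>E. card (?G e)) = (\<Sum>e\<in>E. totient (n div e))"
    by (intro sum.cong refl card_gcd_eq_below E)
  ultimately show ?thesis
    using card_multiples_below[OF assms] \<open>finite E\<close> by (simp add: card_Un_disjoint E_def)
qed

lemma card_cyc_power_closed_nbhd_prime:
  assumes "prime q" "q dvd n" "n > 0"
  shows "card (cyc_power_closed_nbhd n q) = n div q + totient n"
proof -
  have "{e. e dvd q \<and> e \<noteq> q} = {1}"
    using assms(1) by (auto simp: prime_nat_iff)
  then show ?thesis using card_cyc_power_closed_nbhd[OF assms(2,3)] by simp
qed

lemma sum_proper_divisors_prime_power_times_prime_ge:
  fixes f :: "nat \<Rightarrow> nat" and P Q :: nat
  assumes "prime P" "prime Q" "P \<noteq> Q"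
  shows "f 1 + (\<Sum>s<\<beta>. f (P ^ Suc s) + f (P ^ s * Q))
         \<le> (\<Sum>e | e dvd P ^ \<beta> * Q \<and> e \<noteq> P ^ \<beta> * Q. f e)"
proof -
  define D1 where "D1 = (\<lambda>s. P ^ Suc s) ` {..<\<beta>}"
  define D2 where "D2 = (\<lambda>s. P ^ s * Q) ` {..<\<beta>}"
  have "P > 1" "Q > 1" using assms prime_gt_1_nat by auto
  have Q_ndvd: "\<not> Q dvd P ^ s" for s
    using assms prime_dvd_power primes_dvd_imp_eq by metis
  have "1 \<notin> D1 \<union> D2"
  proof
    assume "1 \<in> D1 \<union> D2"
    then obtain s where "1 = P ^ Suc s \<or> 1 = P ^ s * Q" unfolding D1_def D2_def by blast
    then show False using \<open>P > 1\<close> \<open>Q > 1\<close> by simp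
  qed
  moreover have "D1 \<inter> D2 = {}"
  proof -
    have "P ^ Suc s \<noteq> P ^ t * Q" for s t
      using Q_ndvd by (metis dvd_triv_right)
    then show ?thesis unfolding D1_def D2_def by blast
  qed
  moreover have "inj_on (\<lambda>s. P ^ Suc s) {..<\<beta>}" "inj_on (\<lambda>s. P ^ s * Q) {..<\<beta>}"
    using \<open>P > 1\<close> \<open>Q > 1\<close> by (simp_all add: inj_on_def power_inject_exp del: power_Suc)
  ultimately have "(\<Sum>e \<in> insert 1 (D1 \<union> D2). f e) = f 1 + (\<Sum>s<\<beta>. f (P ^ Suc s) + f (P ^ s * Q))"
    by (simp add: D1_def D2_def sum.union_disjoint sum.reindex sum.distrib del: power_Suc)
  moreover have "insert 1 (D1 \<union> D2) \<subseteq> {e. e dvd P ^ \<beta> * Q \<and> e \<noteq> P ^ \<beta> * Q}"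
    unfolding D1_def D2_def
  proof (intro insert_subsetI Un_least image_subsetI CollectI conjI)
    show "1 dvd P ^ \<beta> * Q" "1 \<noteq> P ^ \<beta> * Q" using \<open>Q > 1\<close> by simp_all
  next
    fix s assume "s \<in> {..<\<beta>}"
    then show "P ^ Suc s dvd P ^ \<beta> * Q" "P ^ s * Q dvd P ^ \<beta> * Q"
      using le_imp_power_dvd[of "Suc s" \<beta> P] le_imp_power_dvd[of s \<beta> P] by (simp_all del: power_Suc)
    show "P ^ Suc s \<noteq> P ^ \<beta> * Q"
      using Q_ndvd[of "Suc s"] by (metis dvd_triv_right)
    show "P ^ s * Q \<noteq> P ^ \<beta> * Q"
      using \<open>s \<in> {..<\<beta>}\<close> \<open>P > 1\<close> \<open>Q > 1\<close> by (simp add: power_inject_exp)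
  qed
  moreover have "finite {e. e dvd P ^ \<beta> * Q \<and> e \<noteq> P ^ \<beta> * Q}"
    using \<open>P > 1\<close> \<open>Q > 1\<close> by simp
  ultimately show ?thesis by (metis (no_types, lifting) sum_mono2 zero_le)
qed

lemma totient_prime_power_Suc_le:
  assumes "prime p"
  shows "totient (p ^ Suc m) \<le> p * totient (p ^ m)"
proof (cases m)
  case 0 then show ?thesis using assms by (simp add: totient_prime)
next
  case (Suc k)
  then show ?thesis
    using totient_prime_power_Suc[OF assms, of m] totient_prime_power_Suc[OF assms, of k] by simp
qed

lemma sum_totient_prime_powers:
  assumes "prime p" "\<beta> \<le> a"
  shows "(\<Sum>s<\<beta>. totient (p ^ (a - s))) + p ^ (a - \<beta>) = p ^ a"
  using assms(2)
proof (induction \<beta>)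
  case (Suc m)
  then have exp: "a - m = Suc (a - Suc m)" by simp
  then have "totient (p ^ (a - m)) = p ^ (a - Suc m) * (p - 1)"
    using totient_prime_power_Suc[OF assms(1)] by simp
  then have "totient (p ^ (a - m)) + p ^ (a - Suc m) = p ^ (a - m)"
    using exp prime_gt_1_nat[OF assms(1)] by (simp add: algebra_simps)
  then show ?case using Suc by simp
qed simp

lemma totient_mult_three_prime_powers:
  fixes P Q R :: nat
  assumes "prime P" "prime Q" "prime R" "P \<noteq> Q" "P \<noteq> R" "Q \<noteq> R"
  shows "totient (P ^ x * Q ^ y * R ^ z) = totient (P ^ x) * totient (Q ^ y) * totient (R ^ z)"
proof -
  have "coprime (P ^ x) (Q ^ y)" "coprime (P ^ x * Q ^ y) (R ^ z)"
    using assms primes_coprime[of P Q] primes_coprime[of P R] primes_coprime[of Q R] by simp_all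
  then show ?thesis by (simp add: totient_mult_coprime)
qed

lemma totient_prime_power_times_prime_power:
  fixes Q R b c :: nat
  assumes "prime Q" "prime R" "Q \<noteq> R" "b \<ge> 1" "c \<ge> 1"
  shows "totient (Q ^ b) * totient (R ^ c) = Q ^ (b - 1) * R ^ (c - 1) * totient (Q * R)"
proof -
  have "totient (Q * R) = (Q - 1) * (R - 1)"
    using assms primes_coprime[of Q R] by (simp add: totient_mult_coprime totient_prime)
  then show ?thesis using assms by (simp add: totient_prime_power)
qed

lemma weighted_totient_sum_gt:
  fixes P Q R b c s1 s2 :: nat
  assumes "prime Q" "prime R" "Q \<noteq> R" "b \<ge> 1" "c \<ge> 1"
    and "s2 \<le> P * s1" "s2 > 0"
    and "P * Q * R < (P + Q) * totient (Q * R)"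
  shows "s2 * (Q ^ (b - 1) * R ^ c) < (s1 * totient (Q ^ b) + s2 * totient (Q ^ (b - 1))) * totient (R ^ c)"
proof -
  define G where "G = Q ^ (b - 1) * R ^ (c - 1)"
  define U where "U = totient (Q ^ b)"
  define V where "V = totient (Q ^ (b - 1))"
  define T where "T = totient (R ^ c)"
  have "Q > 0" "R > 0" using assms prime_gt_0_nat by auto
  then have "G > 0" by (simp add: G_def)
  have "U \<le> Q * V"
    using totient_prime_power_Suc_le[OF assms(1), of "b - 1"] assms(4) by (simp add: U_def V_def)
  have UT: "U * T = G * totient (Q * R)"
    using totient_prime_power_times_prime_power[OF assms(1-5)] by (simp add: U_def T_def G_def)
  have "R ^ c = R ^ (c - 1) * R" using assms(5) by (cases c) auto
  then have "P * Q * (s2 * (Q ^ (b - 1) * R ^ c)) = s2 * G * (P * Q * R)"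
    by (simp add: G_def algebra_simps)
  also have "\<dots> < s2 * G * ((P + Q) * totient (Q * R))"
    using assms(7,8) \<open>G > 0\<close> by simp
  also have "\<dots> = s2 * (P + Q) * (G * totient (Q * R))"
    by (simp add: algebra_simps)
  also have "\<dots> = Q * s2 * (U * T) + P * s2 * U * T"
    unfolding UT[symmetric] by (simp add: algebra_simps)
  also have "\<dots> \<le> Q * (P * s1) * (U * T) + P * s2 * (Q * V) * T"
    using assms(6) \<open>U \<le> Q * V\<close> by (intro add_mono mult_mono) auto
  also have "\<dots> = P * Q * ((s1 * U + s2 * V) * T)"
    by (simp add: algebra_simps)
  finally show ?thesis
    by (simp add: U_def V_def T_def)
qed

lemma cyc_power_deg_prime_lt_prime_power_times_prime:
  fixes P Q R a b c \<beta> n :: nat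
  assumes primes: "prime P" "prime Q" "prime R" and distinct: "P \<noteq> Q" "P \<noteq> R" "Q \<noteq> R"
    and "1 \<le> \<beta>" "\<beta> \<le> a" "b \<ge> 1" "c \<ge> 1"
    and n: "n = P ^ a * Q ^ b * R ^ c"
    and "P * Q * R < (P + Q) * totient (Q * R)"
  shows "cyc_power_deg n (Q mod n) < cyc_power_deg n ((P ^ \<beta> * Q) mod n)"
proof -
  define x where "x = P ^ \<beta> * Q"
  define s1 where "s1 = (\<Sum>s<\<beta>. totient (P ^ (a - Suc s)))"
  define s2 where "s2 = (\<Sum>s<\<beta>. totient (P ^ (a - s)))"
  have "P > 1" "Q > 1" "R > 1" using primes prime_gt_1_nat by auto
  have "R ^ c > 1" using \<open>R > 1\<close> \<open>c \<ge> 1\<close> by (intro one_less_power) auto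
  have "P ^ a = P ^ \<beta> * P ^ (a - \<beta>)" using \<open>\<beta> \<le> a\<close> by (simp flip: power_add)
  moreover have "Q ^ b = Q * Q ^ (b - 1)" using \<open>b \<ge> 1\<close> by (simp flip: power_Suc)
  ultimately have nx: "n = x * (P ^ (a - \<beta>) * Q ^ (b - 1) * R ^ c)"
    and nQ: "n = Q * (P ^ a * Q ^ (b - 1) * R ^ c)"
    using n by (simp_all add: x_def ac_simps)
  have "n > 0" "x > 0" using n \<open>P > 1\<close> \<open>Q > 1\<close> \<open>R > 1\<close> by (simp_all add: x_def)
  have cofactor_gt_1: "1 < P ^ k * Q ^ l * R ^ c" for k l
    using \<open>P > 1\<close> \<open>Q > 1\<close> \<open>R ^ c > 1\<close>
    by (metis less_le_trans mult_le_mono1 mult_1 one_le_mult_iff one_le_power less_imp_le)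
  have "x * 1 < n"
    unfolding nx using cofactor_gt_1 \<open>x > 0\<close> by (rule mult_strict_left_mono)
  moreover have "Q * 1 < n"
    unfolding nQ using cofactor_gt_1 \<open>Q > 1\<close> by (simp only: mult_strict_left_mono)
  ultimately have "x < n" "Q < n" by simp_all
  have tot1: "totient (n div P ^ Suc s) = totient (P ^ (a - Suc s)) * totient (Q ^ b) * totient (R ^ c)"
    if "s < \<beta>" for s
  proof -
    have "P ^ a = P ^ Suc s * P ^ (a - Suc s)"
      using that \<open>\<beta> \<le> a\<close> by (simp only: le_add_diff_inverse Suc_leI less_le_trans flip: power_add)
    then have "n = P ^ Suc s * (P ^ (a - Suc s) * Q ^ b * R ^ c)"
      using n by (simp only: mult.assoc)
    then show ?thesis
      using \<open>P > 1\<close> totient_mult_three_prime_powers[OF primes distinct] by simp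
  qed
  have tot2: "totient (n div (P ^ s * Q)) = totient (P ^ (a - s)) * totient (Q ^ (b - 1)) * totient (R ^ c)"
    if "s < \<beta>" for s
  proof -
    have "n = (P ^ s * Q) * (P ^ (a - s) * Q ^ (b - 1) * R ^ c)"
      using nQ that \<open>\<beta> \<le> a\<close> by (simp add: ac_simps flip: power_add)
    then show ?thesis
      using \<open>P > 1\<close> \<open>Q > 1\<close> totient_mult_three_prime_powers[OF primes distinct] by simp
  qed
  have "(\<Sum>s<\<beta>. totient (n div P ^ Suc s) + totient (n div (P ^ s * Q)))
      = (\<Sum>s<\<beta>. totient (P ^ (a - Suc s)) * totient (Q ^ b) * totient (R ^ c)
                 + totient (P ^ (a - s)) * totient (Q ^ (b - 1)) * totient (R ^ c))"
    by (intro sum.cong refl) (simp add: tot1 tot2 del: power_Suc)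
  also have "\<dots> = (s1 * totient (Q ^ b) + s2 * totient (Q ^ (b - 1))) * totient (R ^ c)"
    by (simp add: s1_def s2_def sum.distrib sum_distrib_right distrib_right)
  finally have "n div x + totient n + (s1 * totient (Q ^ b) + s2 * totient (Q ^ (b - 1))) * totient (R ^ c)
          \<le> card (cyc_power_closed_nbhd n x)"
    using card_cyc_power_closed_nbhd[of x n] nx \<open>n > 0\<close>
      sum_proper_divisors_prime_power_times_prime_ge[OF primes(1,2) distinct(1), of "\<lambda>e. totient (n div e)" \<beta>]
    by (simp add: x_def del: power_Suc)
  moreover have "s2 \<le> P * s1"
    unfolding s1_def s2_def sum_distrib_left
  proof (intro sum_mono)
    fix s assume "s \<in> {..<\<beta>}"
    then have "a - s = Suc (a - Suc s)" using \<open>\<beta> \<le> a\<close> by simp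
    then show "totient (P ^ (a - s)) \<le> P * totient (P ^ (a - Suc s))"
      using totient_prime_power_Suc_le[OF primes(1)] by simp
  qed
  moreover have "s2 + P ^ (a - \<beta>) = P ^ a"
    using sum_totient_prime_powers[OF primes(1) \<open>\<beta> \<le> a\<close>] by (simp add: s2_def)
  moreover have "P ^ (a - \<beta>) < P ^ a"
    using \<open>P > 1\<close> \<open>1 \<le> \<beta>\<close> \<open>\<beta> \<le> a\<close> by (simp add: power_strict_increasing)
  ultimately have "n div x + s2 * (Q ^ (b - 1) * R ^ c) + totient n < card (cyc_power_closed_nbhd n x)"
    using weighted_totient_sum_gt[OF primes(2,3) distinct(3) \<open>b \<ge> 1\<close> \<open>c \<ge> 1\<close>, of s2 P s1]
      \<open>P * Q * R < (P + Q) * totient (Q * R)\<close> by linarith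
  moreover have "n div Q = n div x + s2 * (Q ^ (b - 1) * R ^ c)"
  proof -
    have "n div x = P ^ (a - \<beta>) * Q ^ (b - 1) * R ^ c" using \<open>x > 0\<close> by (subst nx) simp
    moreover have "n div Q = P ^ a * Q ^ (b - 1) * R ^ c" using \<open>Q > 1\<close> by (subst nQ) simp
    ultimately show ?thesis
      by (simp add: \<open>s2 + P ^ (a - \<beta>) = P ^ a\<close>[symmetric] algebra_simps)
  qed
  moreover have "card (cyc_power_closed_nbhd n Q) = n div Q + totient n"
    using card_cyc_power_closed_nbhd_prime[OF primes(2) _ \<open>n > 0\<close>] nQ by simp
  ultimately have "0 < card (cyc_power_closed_nbhd n Q)"
    and "card (cyc_power_closed_nbhd n Q) < card (cyc_power_closed_nbhd n x)"
    using \<open>n > 0\<close> by simp_all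
  then show ?thesis
    using cyc_power_deg_eq_card_closed_nbhd \<open>x < n\<close> \<open>Q < n\<close> by (simp add: x_def)
qed

theorem lemma5p2:
  fixes p \<alpha> :: "nat \<Rightarrow> nat" and n i j k :: nat
  assumes "prime (p 1)" "prime (p 2)" "prime (p 3)"
    and "p 1 < p 2" "p 2 < p 3"
    and "\<alpha> 1 \<ge> 1" "\<alpha> 2 \<ge> 1" "\<alpha> 3 \<ge> 1"
    and "n = p 1 ^ \<alpha> 1 * p 2 ^ \<alpha> 2 * p 3 ^ \<alpha> 3"
    and "{i, j, k} = {1, 2, 3}" and "i < j"
    and "int (p i + p j) * int (totient (p j * p k)) - int (p i * p j * p k) > 0"
  shows "\<forall>\<beta>. 1 \<le> \<beta> \<and> \<beta> \<le> \<alpha> i \<longrightarrow>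
           cyc_power_deg n ((p i ^ \<beta> * p j) mod n) > cyc_power_deg n (p j mod n)"
proof (intro allI impI)
  fix \<beta> assume "1 \<le> \<beta> \<and> \<beta> \<le> \<alpha> i"
  have "card {i, j, k} = 3" using assms(10) by simp
  then have "i \<noteq> j" "i \<noteq> k" "j \<noteq> k" by (auto simp: card_insert_if split: if_splits)
  moreover have "i \<in> {1, 2, 3}" "j \<in> {1, 2, 3}" "k \<in> {1, 2, 3}" using assms(10) by blast+
  ultimately have "prime (p i)" "prime (p j)" "prime (p k)"
    and "p i \<noteq> p j" "p i \<noteq> p k" "p j \<noteq> p k"
    and "\<alpha> j \<ge> 1" "\<alpha> k \<ge> 1"
    and "n = p i ^ \<alpha> i * p j ^ \<alpha> j * p k ^ \<alpha> k"
    using assms(1-9) by (auto simp: ac_simps)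
  moreover have "p i * p j * p k < (p i + p j) * totient (p j * p k)"
    using assms(12) by (simp flip: of_nat_mult of_nat_add)
  ultimately show "cyc_power_deg n ((p i ^ \<beta> * p j) mod n) > cyc_power_deg n (p j mod n)"
    using cyc_power_deg_prime_lt_prime_power_times_prime \<open>1 \<le> \<beta> \<and> \<beta> \<le> \<alpha> i\<close> by blast
qed

end
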